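(* Let $A\in\mathfrak{H}_n$, $B\in\mathfrak{M}_n$, $N\in\mathbb{N}$. Then the $N$-approximant satisfies $\big(e^{tA/N}e^{B/N}\big)^N=\sum_{\lambda\in ch_N(\sigma(A))}e^{t\lambda}M_N(\{\lambda\})$ for all $t\in\mathbb{C}$, and the total variation of the discrete measure $M_N$ satisfies \[ \sum_{\lambda\in ch_N(\sigma(A))}\|M_N(\{\lambda\})\|\le n\,e^{n\|B\|}. \]
   Context: Let $\lambda_1,\dots,\lambda_l$ be the distinct eigenvalues of the Hermitian matrix $A$ and $E_{\lambda_1},\dots,E_{\lambda_l}$ the corresponding orthogonal spectral projectors. For $(k_1,\dots,k_N)\in\{1,\dots,l\}^N$, $M_{k_1,\dots,k_N}=E_{\lambda_{k_1}}e^{B/N}\cdots E_{\lambda_{k_N}}e^{B/N}$. The $N$-convex hull $ch_N(\sigma(A))$ is the set of all numbers $\sum_j\frac{n_j}{N}\lambda_j$ with $n_j$ non-negative integers, $n_1+\dots+n_l=N$. For $\lambda\in ch_N(\sigma(A))$, $M_N(\{\lambda\})=\sum M_{k_1,\dots,k_N}$ over all $(k_1,\dots,k_N)$ with $\frac{\lambda_{k_1}+\cdots+\lambda_{k_N}}{N}=\lambda$. $\|\cdot\|$ is the operator norm. *)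

theory Defs
  imports "HOL-Analysis.Analysis"
begin

text \<open>Complex n x n matrices are rendered as complex^'n^'n (dimension n = CARD('n)).\<close>

definition hermitian :: "complex^'n^'n \<Rightarrow> bool" where
  "hermitian A \<longleftrightarrow> (\<forall>i j. A $ i $ j = cnj (A $ j $ i))"

definition cmat_adj :: "complex^'n^'n \<Rightarrow> complex^'n^'n" where
  "cmat_adj A = (\<chi> i j. cnj (A $ j $ i))"

definition cmat_scale :: "complex \<Rightarrow> complex^'n^'n \<Rightarrow> complex^'n^'n" where
  "cmat_scale c A = (\<chi> i j. c * A $ i $ j)"

fun matpow :: "complex^'n^'n \<Rightarrow> nat \<Rightarrow> complex^'n^'n" where
  "matpow M 0 = mat 1"
| "matpow M (Suc k) = M ** matpow M k"

definition mexp :: "complex^'n^'n \<Rightarrow> complex^'n^'n" where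
  "mexp M = (\<Sum>k. scaleR (inverse (fact k)) (matpow M k))"

definition opnorm :: "complex^'n^'n \<Rightarrow> real" where
  "opnorm M = onorm (\<lambda>x. M *v x)"

definition spec :: "complex^'n^'n \<Rightarrow> complex set" where
  "spec A = {c. \<exists>v. v \<noteq> 0 \<and> A *v v = c *s v}"

definition spec_proj :: "complex^'n^'n \<Rightarrow> complex \<Rightarrow> complex^'n^'n" where
  "spec_proj A c = (THE E. E ** E = E \<and> cmat_adj E = E \<and>
       range (\<lambda>x. E *v x) = {v. A *v v = c *s v})"

definition chN :: "nat \<Rightarrow> complex set \<Rightarrow> complex set" where
  "chN N S = {\<Sum>\<mu>\<in>S. (of_nat (m \<mu>) / of_nat N) * \<mu> | m. (\<Sum>\<mu>\<in>S. m \<mu>) = N}"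

text \<open>M_{k_1..k_N} = E_{k_1} e^{B/N} ... E_{k_N} e^{B/N}, indexed directly by the
  list of eigenvalues [lambda_{k_1},...,lambda_{k_N}].\<close>
definition Mword :: "complex^'n^'n \<Rightarrow> complex^'n^'n \<Rightarrow> nat \<Rightarrow> complex list \<Rightarrow> complex^'n^'n" where
  "Mword A B N ls = foldr (\<lambda>\<mu> P. spec_proj A \<mu> ** mexp (cmat_scale (1 / of_nat N) B) ** P) ls (mat 1)"

definition MN :: "complex^'n^'n \<Rightarrow> complex^'n^'n \<Rightarrow> nat \<Rightarrow> complex \<Rightarrow> complex^'n^'n" where
  "MN A B N c = (\<Sum>ls\<in>{ls. length ls = N \<and> set ls \<subseteq> spec A \<and> sum_list ls / of_nat N = c}.
                    Mword A B N ls)"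

end

theory Submission
  imports Defs
begin

text \<open>Since \<open>A\<close> is Hermitian, a maximiser of its Rayleigh quotient on any invariant subspace is an
  eigenvector, so the eigenvectors span \<open>\<complex>\<^sup>n\<close> and \<open>e\<^bsup>sA\<^esup> = \<Sum>\<^sub>\<mu> e\<^bsup>s\<mu>\<^esup> E\<^sub>\<mu>\<close>
  with orthogonal spectral projectors \<open>E\<^sub>\<mu>\<close>. Expanding the \<open>N\<close>-fold product
  \<open>(\<Sum>\<^sub>\<mu> e\<^bsup>t\<mu>/N\<^esup> E\<^sub>\<mu> e\<^bsup>B/N\<^esup>)\<^sup>N\<close> over words \<open>\<mu>\<^sub>1\<dots>\<mu>\<^sub>N\<close> in the spectrum and grouping the
  words by their mean letter gives the identity.

  For the bound, a word factors into blocks \<open>E\<^sub>\<mu> e\<^bsup>B/N\<^esup> E\<^sub>\<nu>\<close>. For \<open>\<mu> \<noteq> \<nu>\<close> we have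
  \<open>E\<^sub>\<mu> E\<^sub>\<nu> = 0\<close>, so \<open>e\<^bsup>B/N\<^esup>\<close> may be replaced by \<open>e\<^bsup>B/N\<^esup> - 1\<close>, of norm at most \<open>e\<^sup>\<beta> - 1\<close>
  where \<open>\<beta> = \<parallel>B\<parallel>/N\<close>; diagonal blocks have norm at most \<open>e\<^sup>\<beta>\<close>. Summing over all words yields
  \<open>l e\<^sup>\<beta> (e\<^sup>\<beta> + (l - 1)(e\<^sup>\<beta> - 1))\<^bsup>N-1\<^esup> \<le> l e\<^bsup>l\<beta>N\<^esup>\<close> by Bernoulli's inequality, where
  \<open>l \<le> n\<close> is the number of distinct eigenvalues.\<close>

section \<open>Operator norm and matrix exponential\<close>

lemma opnorm_mat_vec_le: "norm ((M::complex^'n^'n) *v x) \<le> opnorm M * norm x"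
  unfolding opnorm_def by (rule onorm[OF matrix_vector_mul_bounded_linear])

lemma opnorm_nonneg: "0 \<le> opnorm (M::complex^'n^'n)"
  unfolding opnorm_def by (rule onorm_pos_le[OF matrix_vector_mul_bounded_linear])

lemma opnorm_le: "(\<And>x. norm ((M::complex^'n^'n) *v x) \<le> c * norm x) \<Longrightarrow> opnorm M \<le> c"
  unfolding opnorm_def by (rule onorm_le)

lemma opnorm_mult_le: "opnorm ((M::complex^'n^'n) ** P) \<le> opnorm M * opnorm P"
proof -
  have "(*v) (M ** P) = (*v) M \<circ> (*v) P"
    by (simp add: fun_eq_iff matrix_vector_mul_assoc)
  then show ?thesis
    unfolding opnorm_def by (metis onorm_compose matrix_vector_mul_bounded_linear)
qed

lemma opnorm_mat_1_le: "opnorm (mat 1 :: complex^'n^'n) \<le> 1"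
  by (rule opnorm_le) simp

lemma sum_mat_vec: "(\<Sum>i\<in>S. (f i::complex^'n^'n)) *v x = (\<Sum>i\<in>S. f i *v x)"
  by (induction S rule: infinite_finite_induct) (simp_all add: matrix_vector_mult_add_rdistrib)

lemma opnorm_sum_le:
  "finite S \<Longrightarrow> opnorm (\<Sum>i\<in>S. (f i::complex^'n^'n)) \<le> (\<Sum>i\<in>S. opnorm (f i))"
  unfolding opnorm_def sum_mat_vec by (rule onorm_sum) simp_all

lemma cmat_scale_mat_vec: "cmat_scale c M *v x = c *s (M *v x)"
  by (simp add: cmat_scale_def matrix_vector_mult_def vec_eq_iff sum_distrib_left mult.assoc)

lemma mat_vec_scaleR: "(M::complex^'n^'n) *v (r *\<^sub>R x) = r *\<^sub>R (M *v x)"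
  by (simp add: vec_eq_iff matrix_vector_mult_def scaleR_sum_right)

lemma mat_vec_smult: "(M::complex^'n^'n) *v (c *s x) = c *s (M *v x)"
  by (simp add: vec_eq_iff matrix_vector_mult_def sum_distrib_left mult_ac)

lemma norm_vector_smult: "norm (c *s (x::complex^'n)) = cmod c * norm x"
  by (simp add: scalar_mult_eq_scaleR norm_vec_def norm_mult L2_set_right_distrib)

lemma opnorm_cmat_scale_le: "opnorm (cmat_scale c (M::complex^'n^'n)) \<le> cmod c * opnorm M"
  by (rule opnorm_le)
    (simp add: cmat_scale_mat_vec norm_vector_smult mult.assoc mult_left_mono opnorm_mat_vec_le)

lemma norm_le_opnorm: "norm (M::complex^'n^'n) \<le> real (CARD('n) * CARD('n)) * opnorm M"
proof -
  have entry: "cmod (M $ i $ j) \<le> opnorm M" for i j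
  proof -
    have "cmod (M $ i $ j) = norm ((M *v axis j 1) $ i)"
      by (simp add: matrix_vector_mult_def axis_def if_distrib cong: if_cong)
    also have "\<dots> \<le> norm (M *v axis j 1)" by (rule Finite_Cartesian_Product.norm_nth_le)
    also have "\<dots> \<le> opnorm M" using opnorm_mat_vec_le[of M "axis j 1"] by simp
    finally show ?thesis .
  qed
  have "norm M \<le> (\<Sum>i\<in>UNIV. norm (M $ i))"
    unfolding norm_vec_def by (rule L2_set_le_sum) simp
  also have "\<dots> \<le> (\<Sum>i\<in>(UNIV::'n set). \<Sum>j\<in>(UNIV::'n set). cmod (M $ i $ j))"
    unfolding norm_vec_def by (intro sum_mono L2_set_le_sum) simp
  also have "\<dots> \<le> (\<Sum>i\<in>(UNIV::'n set). \<Sum>j\<in>(UNIV::'n set). opnorm M)"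
    by (intro sum_mono entry)
  finally show ?thesis by simp
qed

lemma opnorm_matpow_le: "opnorm (matpow (X::complex^'n^'n) k) \<le> opnorm X ^ k"
proof (induction k)
  case (Suc k)
  have "opnorm (matpow X (Suc k)) \<le> opnorm X * opnorm (matpow X k)"
    by (simp add: opnorm_mult_le)
  also have "\<dots> \<le> opnorm X ^ Suc k" by (simp add: Suc mult_left_mono opnorm_nonneg)
  finally show ?case .
qed (simp add: opnorm_mat_1_le)

lemma scaleR_mat_vec: "(r *\<^sub>R (M::complex^'n^'n)) *v x = r *\<^sub>R (M *v x)"
  by (simp add: vec_eq_iff matrix_vector_mult_def scaleR_sum_right)

lemma opnorm_scaleR: "opnorm (r *\<^sub>R (M::complex^'n^'n)) = \<bar>r\<bar> * opnorm M"
  unfolding opnorm_def scaleR_mat_vec by (rule onorm_scaleR) simp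

lemma bounded_linear_mat_vec_left: "bounded_linear (\<lambda>M::complex^'n^'n. M *v x)"
proof -
  have "linear (\<lambda>M::complex^'n^'n. M *v x)"
    by (rule linearI) (simp_all add: matrix_vector_mult_add_rdistrib scaleR_mat_vec)
  then show ?thesis using linear_conv_bounded_linear by blast
qed

lemma opnorm_le_sums:
  assumes "f sums (S::complex^'n^'n)" "g sums G" "\<And>k. opnorm (f k) \<le> g k"
  shows "opnorm S \<le> G"
proof (rule opnorm_le)
  fix x
  have fx: "(\<lambda>k. f k *v x) sums (S *v x)"
    by (rule bounded_linear.sums[OF bounded_linear_mat_vec_left assms(1)])
  have gx: "(\<lambda>k. g k * norm x) sums (G * norm x)"
    by (rule sums_mult2[OF assms(2)])
  have bound: "norm (f k *v x) \<le> g k * norm x" for k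
    by (rule order_trans[OF opnorm_mat_vec_le mult_right_mono[OF assms(3)]]) simp
  have summable: "summable (\<lambda>k. norm (f k *v x))"
    by (rule summable_comparison_test'[OF sums_summable[OF gx]]) (simp add: bound)
  have "norm (S *v x) = norm (\<Sum>k. f k *v x)" by (simp add: sums_unique[OF fx])
  also have "\<dots> \<le> (\<Sum>k. norm (f k *v x))" by (rule summable_norm[OF summable])
  also have "\<dots> \<le> (\<Sum>k. g k * norm x)" by (rule suminf_le[OF bound summable sums_summable[OF gx]])
  also have "\<dots> = G * norm x" by (rule sums_unique[OF gx, symmetric])
  finally show "norm (S *v x) \<le> G * norm x" .
qed

lemma opnorm_exp_term_le: "opnorm (inverse (fact k) *\<^sub>R matpow (X::complex^'n^'n) k) \<le> opnorm X ^ k /\<^sub>R fact k"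
  by (simp add: opnorm_scaleR opnorm_matpow_le divide_inverse_commute mult_left_mono del: matpow.simps)

lemma mexp_sums: "(\<lambda>k. inverse (fact k) *\<^sub>R matpow (X::complex^'n^'n) k) sums mexp X"
  unfolding mexp_def
proof (rule summable_sums, rule summable_comparison_test')
  show "summable (\<lambda>k. real (CARD('n) * CARD('n)) * (opnorm X ^ k /\<^sub>R fact k))"
    by (intro summable_mult summable_exp_generic)
  fix k
  have "norm (matpow X k) \<le> real (CARD('n) * CARD('n)) * opnorm X ^ k"
    using norm_le_opnorm[of "matpow X k"] opnorm_matpow_le[of X k]
    by (meson order_trans mult_left_mono of_nat_0_le_iff)
  then show "norm (inverse (fact k) *\<^sub>R matpow X k) \<le> real (CARD('n) * CARD('n)) * (opnorm X ^ k /\<^sub>R fact k)"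
    by (simp add: divide_inverse_commute mult_left_mono mult.left_commute)
qed

lemma opnorm_mexp_le: "opnorm (mexp (X::complex^'n^'n)) \<le> exp (opnorm X)"
  by (rule opnorm_le_sums[OF mexp_sums exp_converges opnorm_exp_term_le])

lemma opnorm_mexp_minus_1_le: "opnorm (mexp (X::complex^'n^'n) - mat 1) \<le> exp (opnorm X) - 1"
proof (rule opnorm_le_sums)
  show "(\<lambda>k. inverse (fact (Suc k)) *\<^sub>R matpow X (Suc k)) sums (mexp X - mat 1)"
    using mexp_sums[of X] by (subst sums_Suc_iff) simp
  show "(\<lambda>k. opnorm X ^ Suc k /\<^sub>R fact (Suc k)) sums (exp (opnorm X) - 1)"
    using exp_converges[of "opnorm X"] by (subst sums_Suc_iff) simp
qed (rule opnorm_exp_term_le)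

lemma matpow_eigenvector: "X *v v = c *s v \<Longrightarrow> matpow X k *v v = c ^ k *s v"
  by (induction k) (simp_all add: matrix_vector_mul_assoc[symmetric] mat_vec_smult vector_smult_assoc mult.commute)

lemma bounded_linear_smult_left: "bounded_linear (\<lambda>c::complex. c *s (v::complex^'n))"
proof -
  have "linear (\<lambda>c::complex. c *s v)"
    by (rule linearI) (simp_all add: vector_sadd_rdistrib vec_eq_iff)
  then show ?thesis using linear_conv_bounded_linear by blast
qed

lemma mexp_eigenvector:
  assumes "X *v v = c *s v"
  shows "mexp (X::complex^'n^'n) *v v = exp c *s v"
proof -
  have "(\<lambda>k. (inverse (fact k) *\<^sub>R matpow X k) *v v) sums (mexp X *v v)"
    by (rule bounded_linear.sums[OF bounded_linear_mat_vec_left mexp_sums])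
  moreover have "(\<lambda>k. (inverse (fact k) *\<^sub>R matpow X k) *v v) = (\<lambda>k. (c ^ k /\<^sub>R fact k) *s v)"
    by (simp add: fun_eq_iff scaleR_mat_vec matpow_eigenvector[OF assms] vec_eq_iff)
  ultimately have "(\<lambda>k. (c ^ k /\<^sub>R fact k) *s v) sums (mexp X *v v)" by simp
  moreover have "(\<lambda>k. (c ^ k /\<^sub>R fact k) *s v) sums (exp c *s v)"
    by (rule bounded_linear.sums[OF bounded_linear_smult_left exp_converges])
  ultimately show ?thesis by (rule sums_unique2)
qed

section \<open>Complex inner product\<close>

definition cinner :: "complex^'n \<Rightarrow> complex^'n \<Rightarrow> complex" where
  "cinner x y = (\<Sum>i\<in>UNIV. x $ i * cnj (y $ i))"

lemma cinner_zero_left [simp]: "cinner 0 y = 0"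
  by (simp add: cinner_def)

lemma cinner_zero_right [simp]: "cinner x 0 = 0"
  by (simp add: cinner_def)

lemma cinner_add_left: "cinner (x + y) z = cinner x z + cinner y z"
  by (simp add: cinner_def distrib_right sum.distrib)

lemma cinner_diff_left: "cinner (x - y) z = cinner x z - cinner y z"
  by (simp add: cinner_def left_diff_distrib sum_subtractf)

lemma cinner_smult_left: "cinner (c *s x) y = c * cinner x y"
  by (simp add: cinner_def sum_distrib_left mult.assoc)

lemma cinner_smult_right: "cinner x (c *s y) = cnj c * cinner x y"
  by (simp add: cinner_def sum_distrib_left mult_ac)

lemma cinner_scaleR_left: "cinner (r *\<^sub>R x) y = of_real r * cinner x y"
  by (simp add: cinner_def sum_distrib_left mult.assoc) (simp add: scaleR_conv_of_real)

lemma cinner_sum_right: "cinner x (\<Sum>i\<in>S. f i) = (\<Sum>i\<in>S. cinner x (f i))"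
  by (induction S rule: infinite_finite_induct)
    (simp_all add: cinner_def distrib_left sum.distrib)

lemma cinner_commute: "cinner y x = cnj (cinner x y)"
  by (simp add: cinner_def mult.commute)

lemma Re_cinner: "Re (cinner x y) = x \<bullet> y"
  by (simp add: cinner_def inner_vec_def inner_complex_def)

lemma cinner_self: "cinner x x = of_real ((norm x)\<^sup>2)"
proof -
  have "cinner x x = (\<Sum>i\<in>UNIV. of_real ((cmod (x $ i))\<^sup>2))"
    unfolding cinner_def by (intro sum.cong refl) (rule complex_norm_square[symmetric])
  then show ?thesis by (simp add: power2_norm_eq_inner inner_vec_def)
qed

lemma cinner_self_eq_0 [simp]: "cinner x x = 0 \<longleftrightarrow> x = 0"
  by (simp add: cinner_self)

lemma cinner_eq_0_if_Re:
  assumes "\<And>c. Re (cinner x (c *s y)) = 0"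
  shows "cinner x y = 0"
proof -
  have "Re (cinner x y) = 0" using assms[of 1] by simp
  moreover have "Im (cinner x y) = 0" using assms[of \<i>] by (simp add: cinner_smult_right)
  ultimately show ?thesis by (simp add: complex_eq_iff)
qed

lemma cinner_mat_vec_adj: "cinner ((M::complex^'n^'n) *v x) y = cinner x (cmat_adj M *v y)"
proof -
  have "cinner (M *v x) y = (\<Sum>i\<in>UNIV. \<Sum>j\<in>UNIV. M $ i $ j * x $ j * cnj (y $ i))"
    by (simp add: cinner_def matrix_vector_mult_def sum_distrib_right)
  also have "\<dots> = (\<Sum>j\<in>UNIV. \<Sum>i\<in>UNIV. M $ i $ j * x $ j * cnj (y $ i))" by (rule sum.swap)
  also have "\<dots> = cinner x (cmat_adj M *v y)"
    by (simp add: cinner_def cmat_adj_def matrix_vector_mult_def sum_distrib_left mult_ac)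
  finally show ?thesis .
qed

lemma cmat_adj_cmat_adj [simp]: "cmat_adj (cmat_adj M) = (M::complex^'n^'n)"
  by (simp add: cmat_adj_def vec_eq_iff)

lemma cmat_adj_mult: "cmat_adj ((M::complex^'n^'n) ** P) = cmat_adj P ** cmat_adj M"
  by (simp add: cmat_adj_def matrix_matrix_mult_def vec_eq_iff mult.commute)

lemma mat_eq_iff_cinner:
  "(M::complex^'n^'n) = P \<longleftrightarrow> (\<forall>x y. cinner (M *v x) y = cinner (P *v x) y)"
proof (intro iffI matrix_eq[THEN iffD2] allI)
  fix x
  assume "\<forall>x y. cinner (M *v x) y = cinner (P *v x) y"
  then have "cinner (M *v x - P *v x) (M *v x - P *v x) = 0" by (simp add: cinner_diff_left)
  then show "M *v x = P *v x" by simp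
qed simp

section \<open>Eigenvectors of Hermitian matrices\<close>

lemma linear_coeff_eq_0_if_quadratic_nonpos:
  fixes a b :: real
  assumes "\<And>t. 2 * t * a + t\<^sup>2 * b \<le> 0"
  shows "a = 0"
proof -
  define c where "c = \<bar>b\<bar> + 1"
  have c: "c > 0" "2 * c + b > 0" unfolding c_def by auto
  have "2 * (a / c) * a + (a / c)\<^sup>2 * b = a\<^sup>2 * (2 * c + b) / c\<^sup>2"
    using c(1) by (simp add: field_simps power2_eq_square)
  then have "a\<^sup>2 * (2 * c + b) / c\<^sup>2 \<le> 0" using assms[of "a / c"] by simp
  then have "a\<^sup>2 * (2 * c + b) \<le> 0" using c(1) by (simp add: divide_le_0_iff)
  then have "a\<^sup>2 \<le> 0" using c(2) by (simp add: mult_le_0_iff)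
  then show ?thesis by simp
qed

definition complex_subspace :: "(complex^'n) set \<Rightarrow> bool" where
  "complex_subspace W \<longleftrightarrow> subspace W \<and> (\<forall>c. \<forall>w\<in>W. c *s w \<in> W)"

locale hermitian_matrix =
  fixes A :: "complex^'n^'n"
  assumes hermitian: "hermitian A"
begin

lemma cmat_adj_eq: "cmat_adj A = A"
proof -
  have entry: "A $ i $ j = cnj (A $ j $ i)" for i j
    using hermitian unfolding hermitian_def by blast
  show ?thesis by (simp add: cmat_adj_def vec_eq_iff entry[symmetric])
qed

lemma cinner_self_adjoint: "cinner (A *v x) y = cinner x (A *v y)"
  by (simp add: cinner_mat_vec_adj cmat_adj_eq)

lemma eigenvalue_real:
  assumes "A *v v = \<mu> *s v" "v \<noteq> 0"
  shows "cnj \<mu> = \<mu>"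
proof -
  have "\<mu> * cinner v v = cinner (A *v v) v" by (simp add: assms cinner_smult_left)
  also have "\<dots> = cinner v (A *v v)" by (rule cinner_self_adjoint)
  also have "\<dots> = cnj \<mu> * cinner v v" by (simp add: assms cinner_smult_right)
  finally show ?thesis using assms(2) by simp
qed

lemma eigenvectors_orthogonal:
  assumes "A *v v = \<mu> *s v" "A *v w = \<nu> *s w" "\<mu> \<noteq> \<nu>"
  shows "cinner v w = 0"
proof (cases "w = 0")
  case False
  have "\<mu> * cinner v w = cinner (A *v v) w" by (simp add: assms cinner_smult_left)
  also have "\<dots> = cinner v (A *v w)" by (rule cinner_self_adjoint)
  also have "\<dots> = \<nu> * cinner v w"
    by (simp add: assms cinner_smult_right eigenvalue_real[OF assms(2) False])
  finally show ?thesis using assms(3) by simp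
qed simp

text \<open>Perturbing a maximiser of the Rayleigh quotient in an orthogonal direction must not
  increase the quotient to first order.\<close>

lemma Rayleigh_maximizer_orthogonal:
  assumes W: "complex_subspace W" "\<forall>w\<in>W. A *v w \<in> W"
    and x0: "x0 \<in> W" "norm x0 = 1"
    and max: "\<forall>w\<in>W. norm w = 1 \<longrightarrow> (A *v w) \<bullet> w \<le> (A *v x0) \<bullet> x0"
    and y: "y \<in> W" "cinner y x0 = 0"
  shows "cinner (A *v x0) y = 0"
proof (rule cinner_eq_0_if_Re)
  define q where "q w = (A *v w) \<bullet> w" for w
  have sub: "subspace W" and smult: "\<And>c w. w \<in> W \<Longrightarrow> c *s w \<in> W"
    using W(1) by (auto simp: complex_subspace_def)
  have sym: "(A *v w) \<bullet> z = (A *v z) \<bullet> w" for w z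
  proof -
    have "(A *v w) \<bullet> z = Re (cinner w (A *v z))" by (simp add: Re_cinner[symmetric] cinner_self_adjoint)
    also have "\<dots> = Re (cinner (A *v z) w)" by (subst cinner_commute) simp
    finally show ?thesis by (simp add: Re_cinner)
  qed
  have bound: "q w \<le> q x0 * (norm w)\<^sup>2" if "w \<in> W" for w
  proof (cases "w = 0")
    case False
    have "(1 / norm w) *\<^sub>R w \<in> W" "norm ((1 / norm w) *\<^sub>R w) = 1"
      using sub that False by (simp_all add: subspace_scale)
    then have "q ((1 / norm w) *\<^sub>R w) \<le> q x0" using max unfolding q_def by blast
    moreover have "q ((1 / norm w) *\<^sub>R w) = q w / (norm w)\<^sup>2"
      by (simp add: q_def mat_vec_scaleR power2_eq_square)
    ultimately show ?thesis using False by (simp add: divide_le_eq)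
  qed (simp add: q_def)
  fix c
  have z: "c *s y \<in> W" "cinner (c *s y) x0 = 0" using y smult by (auto simp: cinner_smult_left)
  then have z_x0: "z \<bullet> x0 = 0" if "z = c *s y" for z
    using that Re_cinner[of z x0] by simp
  have "(A *v x0) \<bullet> (c *s y) = 0"
  proof (rule linear_coeff_eq_0_if_quadratic_nonpos)
    fix t :: real
    let ?z = "c *s y"
    have "x0 + t *\<^sub>R ?z \<in> W" using sub x0(1) z(1) by (simp add: subspace_add subspace_scale)
    then have "q (x0 + t *\<^sub>R ?z) \<le> q x0 * (norm (x0 + t *\<^sub>R ?z))\<^sup>2" by (rule bound)
    moreover have "q (x0 + t *\<^sub>R ?z) = q x0 + 2 * t * ((A *v x0) \<bullet> ?z) + t\<^sup>2 * q ?z"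
      by (simp add: q_def matrix_vector_right_distrib mat_vec_scaleR inner_add_left inner_add_right
          sym[of ?z x0] algebra_simps power2_eq_square)
    moreover have "(norm (x0 + t *\<^sub>R ?z))\<^sup>2 = 1 + t\<^sup>2 * (norm ?z)\<^sup>2"
      using x0(2) z_x0[OF refl]
      by (simp add: norm_add_Pythagorean orthogonal_def inner_commute[of x0] power_mult_distrib)
    ultimately have "q x0 + 2 * t * ((A *v x0) \<bullet> ?z) + t\<^sup>2 * q ?z \<le> q x0 * (1 + t\<^sup>2 * (norm ?z)\<^sup>2)"
      by simp
    then show "2 * t * ((A *v x0) \<bullet> ?z) + t\<^sup>2 * (q ?z - q x0 * (norm ?z)\<^sup>2) \<le> 0"
      by (simp add: algebra_simps)
  qed
  then show "Re (cinner (A *v x0) (c *s y)) = 0" by (simp add: Re_cinner)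
qed

lemma Rayleigh_maximizer_eigenvector:
  assumes W: "complex_subspace W" "\<forall>w\<in>W. A *v w \<in> W"
    and x0: "x0 \<in> W" "norm x0 = 1"
    and max: "\<forall>w\<in>W. norm w = 1 \<longrightarrow> (A *v w) \<bullet> w \<le> (A *v x0) \<bullet> x0"
  shows "A *v x0 = cinner (A *v x0) x0 *s x0"
proof -
  define u where "u = A *v x0 - cinner (A *v x0) x0 *s x0"
  have x0_x0: "cinner x0 x0 = 1" using x0(2) by (simp add: cinner_self)
  have "u \<in> W"
    using W x0(1) unfolding u_def complex_subspace_def by (simp add: subspace_diff)
  moreover have u_x0: "cinner u x0 = 0"
    by (simp add: u_def cinner_diff_left cinner_smult_left x0_x0)
  ultimately have "cinner (A *v x0) u = 0" by (rule Rayleigh_maximizer_orthogonal[OF W x0 max])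
  moreover have "cinner x0 u = 0" using u_x0 cinner_commute[of x0 u] by simp
  ultimately have "cinner u u = 0" by (simp add: u_def cinner_diff_left cinner_smult_left)
  then show ?thesis by (simp add: u_def)
qed

lemma invariant_subspace_has_eigenvector:
  assumes W: "complex_subspace W" "\<forall>w\<in>W. A *v w \<in> W"
    and x: "x \<in> W" "x \<noteq> 0"
  shows "\<exists>v\<in>W. v \<noteq> 0 \<and> (\<exists>\<mu>. A *v v = \<mu> *s v)"
proof -
  have sub: "subspace W" using W(1) by (simp add: complex_subspace_def)
  have "compact (W \<inter> sphere 0 1)"
    by (intro closed_Int_compact closed_subspace sub compact_sphere)
  moreover have "(1 / norm x) *\<^sub>R x \<in> W \<inter> sphere 0 1"
    using sub x by (simp add: subspace_scale)
  moreover have "continuous_on (W \<inter> sphere 0 1) (\<lambda>w. (A *v w) \<bullet> w)"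
    by (intro continuous_intros)
  ultimately obtain x0 where x0: "x0 \<in> W \<inter> sphere 0 1"
    and max: "\<forall>w\<in>W \<inter> sphere 0 1. (A *v w) \<bullet> w \<le> (A *v x0) \<bullet> x0"
    using continuous_attains_sup[of "W \<inter> sphere 0 1"] by blast
  have "A *v x0 = cinner (A *v x0) x0 *s x0"
    by (rule Rayleigh_maximizer_eigenvector[OF W]) (use x0 max in auto)
  then show ?thesis using x0 by (intro bexI[of _ x0]) auto
qed

lemma span_eigenvectors: "span {v. \<exists>\<mu>. A *v v = \<mu> *s v} = UNIV"
proof (rule ccontr)
  let ?V = "{v. \<exists>\<mu>. A *v v = \<mu> *s v}"
  assume "span ?V \<noteq> UNIV"
  then have "dim ?V < DIM(complex^'n)"
    using dim_eq_full[of ?V] dim_subset_UNIV[of ?V] by linarith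
  then obtain x :: "complex^'n" where x: "x \<noteq> 0" "\<And>y. y \<in> span ?V \<Longrightarrow> orthogonal x y"
    using orthogonal_to_subspace_exists by blast
  define W where "W = {w. \<forall>v\<in>?V. cinner w v = 0}"
  have W_sub: "complex_subspace W"
    unfolding complex_subspace_def subspace_def W_def
    by (simp add: cinner_add_left cinner_smult_left cinner_scaleR_left)
  have W_inv: "\<forall>w\<in>W. A *v w \<in> W"
  proof (intro ballI)
    fix w assume w: "w \<in> W"
    have "cinner (A *v w) v = 0" if "A *v v = \<mu> *s v" for v \<mu>
      using w that by (simp add: W_def cinner_self_adjoint cinner_smult_right)
    then show "A *v w \<in> W" by (auto simp: W_def)
  qed
  have "x \<in> W"
    unfolding W_def
  proof (intro CollectI ballI cinner_eq_0_if_Re)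
    fix v c assume "v \<in> ?V"
    then have "c *s v \<in> span ?V"
      by (intro span_base) (auto simp: mat_vec_smult vector_smult_assoc mult.commute)
    then show "Re (cinner x (c *s v)) = 0" using x(2) by (simp add: Re_cinner orthogonal_def)
  qed
  then obtain v where "v \<in> W" "v \<noteq> 0" "v \<in> ?V"
    using invariant_subspace_has_eigenvector[OF W_sub W_inv _ x(1)] by blast
  then have "cinner v v = 0" "v \<noteq> 0" unfolding W_def by blast+
  then show False by simp
qed

lemma mat_eq_on_eigenvectors:
  assumes "\<And>v \<alpha>. A *v v = \<alpha> *s v \<Longrightarrow> \<alpha> \<in> spec A \<Longrightarrow> (M::complex^'n^'n) *v v = P *v v"
  shows "M = P"
proof (rule matrix_eq[THEN iffD2], rule allI)
  fix x :: "complex^'n"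
  have "M *v v = P *v v" if "v \<in> {v. \<exists>\<mu>. A *v v = \<mu> *s v}" for v
    using that assms by (cases "v = 0") (auto simp: spec_def)
  moreover have "x \<in> span {v. \<exists>\<mu>. A *v v = \<mu> *s v}" by (simp add: span_eigenvectors)
  ultimately show "M *v x = P *v x"
    using linear_eq_on_span[OF matrix_vector_mul_linear matrix_vector_mul_linear] by blast
qed

text \<open>For one eigenvector \<open>v\<^sub>\<mu>\<close> per eigenvalue, the vectors \<open>v\<^sub>\<mu>\<close> and \<open>\<i> v\<^sub>\<mu>\<close> are pairwise
  orthogonal for the real inner product, so there are at most \<open>DIM(complex^'n) = 2 * CARD('n)\<close>
  of them.\<close>

lemma finite_spec_card_le: "finite (spec A) \<and> card (spec A) \<le> CARD('n)"
proof -
  have "\<forall>\<mu>\<in>spec A. \<exists>v. v \<noteq> 0 \<and> A *v v = \<mu> *s v" by (simp add: spec_def)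
  from bchoice[OF this] obtain ev
    where ev: "\<And>\<mu>. \<mu> \<in> spec A \<Longrightarrow> ev \<mu> \<noteq> 0 \<and> A *v ev \<mu> = \<mu> *s ev \<mu>"
    by blast
  define D where "D = spec A \<times> {1, \<i>}"
  define g where "g = (\<lambda>(\<mu>, c). c *s ev \<mu>)"
  have g_inner: "g (\<mu>, c) \<bullet> g (\<nu>, d) = Re (c * cnj d * cinner (ev \<mu>) (ev \<nu>))" for \<mu> \<nu> c d
    by (simp add: g_def Re_cinner[symmetric] cinner_smult_left cinner_smult_right mult_ac)
  have orth: "g a \<bullet> g b = 0" if "a \<in> D" "b \<in> D" "a \<noteq> b" for a b
  proof -
    obtain \<mu> c \<nu> d where ab: "a = (\<mu>, c)" "b = (\<nu>, d)" by (cases a, cases b) auto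
    have \<mu>: "\<mu> \<in> spec A" and \<nu>: "\<nu> \<in> spec A" and c: "c \<in> {1, \<i>}" and d: "d \<in> {1, \<i>}"
      using that ab by (auto simp: D_def)
    show ?thesis
    proof (cases "\<mu> = \<nu>")
      case True
      then have "c \<noteq> d" using that ab by auto
      then show ?thesis using True c d by (auto simp: ab g_inner cinner_self)
    next
      case False
      then have "cinner (ev \<mu>) (ev \<nu>) = 0" using eigenvectors_orthogonal ev[OF \<mu>] ev[OF \<nu>] by blast
      then show ?thesis by (simp add: ab g_inner)
    qed
  qed
  have nonzero: "g a \<noteq> 0" if "a \<in> D" for a
  proof -
    obtain \<mu> c where "a = (\<mu>, c)" by (cases a) auto
    then show ?thesis using that ev[of \<mu>] by (auto simp: D_def g_def)
  qed
  have inj: "inj_on g D"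
  proof (rule inj_onI, rule ccontr)
    fix a b assume "a \<in> D" "b \<in> D" "g a = g b" "a \<noteq> b"
    then have "g a \<bullet> g a = 0" using orth by metis
    then show False using nonzero \<open>a \<in> D\<close> by simp
  qed
  have "independent (g ` D)"
    by (rule pairwise_orthogonal_independent)
      (use orth nonzero in \<open>auto simp: pairwise_def orthogonal_def\<close>)
  then have "finite (g ` D)" "card (g ` D) \<le> DIM(complex^'n)"
    using independent_bound[of "g ` D"] by auto
  then have "finite D" "card D \<le> CARD('n) * 2"
    using finite_imageD[OF _ inj] card_image[OF inj] by simp_all
  moreover have "card D = card (spec A) * 2"
    unfolding D_def by (simp add: card_cartesian_product)
  ultimately show ?thesis
    unfolding D_def by (metis finite_cartesian_productD1 insert_not_empty mult_le_cancel2 zero_less_numeral)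
qed

lemma finite_spec: "finite (spec A)"
  using finite_spec_card_le by simp

lemma card_spec_le: "card (spec A) \<le> CARD('n)"
  using finite_spec_card_le by simp

end

section \<open>Spectral projectors\<close>

lemma orthogonal_projector_unique:
  fixes P Q :: "complex^'n^'n"
  assumes P: "P ** P = P" "cmat_adj P = P" and Q: "Q ** Q = Q" "cmat_adj Q = Q"
    and range: "range ((*v) P) = range ((*v) Q)"
  shows "P = Q"
proof -
  have fixes_range: "R *v y = y" if idem: "R ** R = R" and y: "y \<in> range ((*v) R)"
    for R :: "complex^'n^'n" and y
  proof -
    obtain z where "y = R *v z" using y by blast
    then show ?thesis by (simp only: matrix_vector_mul_assoc idem)
  qed
  have "Q *v (P *v x) = P *v x" "P *v (Q *v x) = Q *v x" for x
    using fixes_range[OF Q(1), of "P *v x"] fixes_range[OF P(1), of "Q *v x"] range by auto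
  then have QP: "Q ** P = P" and PQ: "P ** Q = Q"
    by (simp_all add: matrix_eq[of "_ ** _"] matrix_vector_mul_assoc[symmetric])
  have "P = cmat_adj (Q ** P)" by (simp add: QP P)
  also have "\<dots> = P ** Q" by (simp add: cmat_adj_mult P Q)
  finally show ?thesis by (simp add: PQ)
qed

lemma opnorm_orthogonal_projector_le:
  fixes P :: "complex^'n^'n"
  assumes "P ** P = P" "cmat_adj P = P"
  shows "opnorm P \<le> 1"
proof (rule opnorm_le)
  fix x
  have "(norm (P *v x))\<^sup>2 = Re (cinner (P *v x) (P *v x))" by (simp add: cinner_self)
  also have "\<dots> = Re (cinner x (P *v x))"
    by (simp add: cinner_mat_vec_adj matrix_vector_mul_assoc assms)
  also have "\<dots> \<le> norm x * norm (P *v x)" by (simp add: Re_cinner norm_cauchy_schwarz)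
  finally have "norm (P *v x) * norm (P *v x) \<le> norm x * norm (P *v x)"
    by (simp add: power2_eq_square)
  then show "norm (P *v x) \<le> 1 * norm x"
    by (cases "P *v x = 0") (simp_all add: mult_le_cancel_right)
qed

context hermitian_matrix
begin

text \<open>The Lagrange interpolation polynomial of the spectrum, evaluated at \<open>A\<close>, witnesses the
  existence of the spectral projector:
  \<open>E\<^sub>\<mu> = \<Prod>\<^bsub>\<nu>\<in>spec A - {\<mu>}\<^esub> (A - \<nu>) / (\<mu> - \<nu>)\<close>.\<close>

definition lagrange_proj :: "complex \<Rightarrow> complex^'n^'n" where
  "lagrange_proj \<mu> = foldr (\<lambda>\<nu> M. cmat_scale (1 / (\<mu> - \<nu>)) (A - cmat_scale \<nu> (mat 1)) ** M)
     (SOME ls. set ls = spec A - {\<mu>} \<and> distinct ls) (mat 1)"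

lemma lagrange_proj_eigenvector:
  assumes "A *v v = \<alpha> *s v" "\<alpha> \<in> spec A"
  shows "lagrange_proj \<mu> *v v = (if \<alpha> = \<mu> then v else 0)"
proof -
  have factor: "cmat_scale (1 / (\<mu> - \<nu>)) (A - cmat_scale \<nu> (mat 1)) *v v = ((\<alpha> - \<nu>) / (\<mu> - \<nu>)) *s v"
    for \<nu>
    by (simp add: assms(1) cmat_scale_mat_vec matrix_vector_mult_diff_rdistrib vec_eq_iff
        diff_divide_distrib)
  have foldr_eigen: "foldr (\<lambda>\<nu> M. cmat_scale (1 / (\<mu> - \<nu>)) (A - cmat_scale \<nu> (mat 1)) ** M) ls (mat 1) *v v
      = (\<Prod>\<nu>\<leftarrow>ls. (\<alpha> - \<nu>) / (\<mu> - \<nu>)) *s v" for ls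
    by (induction ls)
      (simp_all add: matrix_vector_mul_assoc[symmetric] mat_vec_smult factor vector_smult_assoc mult.commute)
  define ls where "ls = (SOME ls. set ls = spec A - {\<mu>} \<and> distinct ls)"
  have ls: "set ls = spec A - {\<mu>} \<and> distinct ls"
    unfolding ls_def by (rule someI_ex) (use finite_distinct_list finite_spec in blast)
  have "lagrange_proj \<mu> *v v = (\<Prod>\<nu>\<in>spec A - {\<mu>}. (\<alpha> - \<nu>) / (\<mu> - \<nu>)) *s v"
    using ls prod.distinct_set_conv_list[of ls "\<lambda>\<nu>. (\<alpha> - \<nu>) / (\<mu> - \<nu>)"]
    by (simp add: lagrange_proj_def ls_def[symmetric] foldr_eigen)
  moreover have "(\<Prod>\<nu>\<in>spec A - {\<mu>}. (\<alpha> - \<nu>) / (\<mu> - \<nu>)) = (if \<alpha> = \<mu> then 1 else 0)"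
    using assms(2) finite_spec by auto
  ultimately show ?thesis by simp
qed

lemma sum_lagrange_proj: "(\<Sum>\<mu>\<in>spec A. lagrange_proj \<mu>) = mat 1"
proof (rule mat_eq_on_eigenvectors)
  fix v \<alpha> assume v: "A *v v = \<alpha> *s v" and \<alpha>: "\<alpha> \<in> spec A"
  then show "(\<Sum>\<mu>\<in>spec A. lagrange_proj \<mu>) *v v = mat 1 *v v"
    by (simp add: sum_mat_vec lagrange_proj_eigenvector[OF v \<alpha>] finite_spec)
qed

lemma lagrange_proj_idem: "lagrange_proj \<mu> ** lagrange_proj \<mu> = lagrange_proj \<mu>"
proof (rule mat_eq_on_eigenvectors)
  fix v \<alpha> assume v: "A *v v = \<alpha> *s v" and \<alpha>: "\<alpha> \<in> spec A"
  then show "(lagrange_proj \<mu> ** lagrange_proj \<mu>) *v v = lagrange_proj \<mu> *v v"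
    by (simp add: matrix_vector_mul_assoc[symmetric] lagrange_proj_eigenvector[OF v \<alpha>])
qed

lemma lagrange_proj_range: "A *v (lagrange_proj \<mu> *v x) = \<mu> *s (lagrange_proj \<mu> *v x)"
proof -
  have "A ** lagrange_proj \<mu> = cmat_scale \<mu> (lagrange_proj \<mu>)"
  proof (rule mat_eq_on_eigenvectors)
    fix v \<alpha> assume v: "A *v v = \<alpha> *s v" and \<alpha>: "\<alpha> \<in> spec A"
    then show "(A ** lagrange_proj \<mu>) *v v = cmat_scale \<mu> (lagrange_proj \<mu>) *v v"
      by (simp add: matrix_vector_mul_assoc[symmetric] lagrange_proj_eigenvector[OF v \<alpha>]
          cmat_scale_mat_vec)
  qed
  then show ?thesis by (simp add: matrix_vector_mul_assoc cmat_scale_mat_vec)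
qed

lemma lagrange_proj_self_adjoint:
  assumes "\<mu> \<in> spec A"
  shows "cmat_adj (lagrange_proj \<mu>) = lagrange_proj \<mu>"
proof -
  let ?E = lagrange_proj
  have absorb: "cinner (?E \<mu> *v x) y = cinner (?E \<mu> *v x) (?E \<mu> *v y)" for x y
  proof -
    have "(\<Sum>\<nu>\<in>spec A. ?E \<nu> *v y) = y"
      by (simp add: sum_mat_vec[symmetric] sum_lagrange_proj)
    then have "cinner (?E \<mu> *v x) y = (\<Sum>\<nu>\<in>spec A. cinner (?E \<mu> *v x) (?E \<nu> *v y))"
      by (metis cinner_sum_right)
    also have "\<dots> = cinner (?E \<mu> *v x) (?E \<mu> *v y)"
      using assms finite_spec
      by (subst sum.remove) (auto intro!: sum.neutral eigenvectors_orthogonal lagrange_proj_range)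
    finally show ?thesis .
  qed
  show ?thesis
    unfolding mat_eq_iff_cinner
  proof (intro allI)
    fix x y
    have "cinner (cmat_adj (?E \<mu>) *v x) y = cinner x (?E \<mu> *v y)"
      by (simp add: cinner_mat_vec_adj)
    also have "\<dots> = cnj (cinner (?E \<mu> *v y) (?E \<mu> *v x))"
      by (subst absorb[of y x, symmetric]) (rule cinner_commute)
    also have "\<dots> = cinner (?E \<mu> *v x) y"
      by (simp only: cinner_commute[of "?E \<mu> *v y" "?E \<mu> *v x"] complex_cnj_cnj absorb[of x y])
    finally show "cinner (cmat_adj (?E \<mu>) *v x) y = cinner (?E \<mu> *v x) y" .
  qed
qed

lemma spec_proj_eq_lagrange_proj:
  assumes "\<mu> \<in> spec A"
  shows "spec_proj A \<mu> = lagrange_proj \<mu>"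
proof -
  have range: "range ((*v) (lagrange_proj \<mu>)) = {v. A *v v = \<mu> *s v}"
  proof
    show "range ((*v) (lagrange_proj \<mu>)) \<subseteq> {v. A *v v = \<mu> *s v}"
      by (auto simp only: lagrange_proj_range mem_Collect_eq)
    show "{v. A *v v = \<mu> *s v} \<subseteq> range ((*v) (lagrange_proj \<mu>))"
    proof
      fix v assume "v \<in> {v. A *v v = \<mu> *s v}"
      then have "lagrange_proj \<mu> *v v = v" using lagrange_proj_eigenvector[OF _ assms] by simp
      then show "v \<in> range ((*v) (lagrange_proj \<mu>))" by (rule range_eqI[OF sym])
    qed
  qed
  show ?thesis
    unfolding spec_proj_def
  proof (rule the_equality)
    fix F
    assume F: "F ** F = F \<and> cmat_adj F = F \<and> range ((*v) F) = {v. A *v v = \<mu> *s v}"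
    show "F = lagrange_proj \<mu>"
      using F range
      by (intro orthogonal_projector_unique[OF _ _ lagrange_proj_idem lagrange_proj_self_adjoint[OF assms]])
        simp_all
  qed (simp add: lagrange_proj_idem lagrange_proj_self_adjoint[OF assms] range)
qed

lemma spec_proj_eigenvector:
  "\<mu> \<in> spec A \<Longrightarrow> A *v v = \<alpha> *s v \<Longrightarrow> \<alpha> \<in> spec A \<Longrightarrow> spec_proj A \<mu> *v v = (if \<alpha> = \<mu> then v else 0)"
  by (simp add: spec_proj_eq_lagrange_proj lagrange_proj_eigenvector[of v \<alpha>])

lemma spec_proj_idem: "\<mu> \<in> spec A \<Longrightarrow> spec_proj A \<mu> ** spec_proj A \<mu> = spec_proj A \<mu>"
  by (simp add: spec_proj_eq_lagrange_proj lagrange_proj_idem)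

lemma spec_proj_orthogonal:
  assumes "\<mu> \<in> spec A" "\<nu> \<in> spec A" "\<mu> \<noteq> \<nu>"
  shows "spec_proj A \<mu> ** spec_proj A \<nu> = 0"
proof (rule mat_eq_on_eigenvectors)
  fix v \<alpha> assume v: "A *v v = \<alpha> *s v" and \<alpha>: "\<alpha> \<in> spec A"
  then show "(spec_proj A \<mu> ** spec_proj A \<nu>) *v v = 0 *v v"
    using assms by (simp add: matrix_vector_mul_assoc[symmetric] spec_proj_eigenvector[OF _ v \<alpha>])
qed

lemma opnorm_spec_proj_le: "\<mu> \<in> spec A \<Longrightarrow> opnorm (spec_proj A \<mu>) \<le> 1"
  by (simp add: spec_proj_eq_lagrange_proj opnorm_orthogonal_projector_le lagrange_proj_idem
      lagrange_proj_self_adjoint)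

lemma mexp_cmat_scale_spectral:
  "mexp (cmat_scale s A) = (\<Sum>\<mu>\<in>spec A. cmat_scale (exp (s * \<mu>)) (spec_proj A \<mu>))"
proof (rule mat_eq_on_eigenvectors)
  fix v \<alpha> assume v: "A *v v = \<alpha> *s v" and \<alpha>: "\<alpha> \<in> spec A"
  have "mexp (cmat_scale s A) *v v = exp (s * \<alpha>) *s v"
    by (rule mexp_eigenvector) (simp add: cmat_scale_mat_vec v vector_smult_assoc)
  also have "\<dots> = (\<Sum>\<mu>\<in>spec A. cmat_scale (exp (s * \<mu>)) (spec_proj A \<mu>)) *v v"
    using \<alpha> finite_spec
    by (simp add: sum_mat_vec cmat_scale_mat_vec spec_proj_eigenvector[OF _ v \<alpha>] if_distrib
        cong: if_cong)
  finally show "mexp (cmat_scale s A) *v v = (\<Sum>\<mu>\<in>spec A. cmat_scale (exp (s * \<mu>)) (spec_proj A \<mu>)) *v v" .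
qed

end

section \<open>Words and the N-convex hull\<close>

definition words :: "'a set \<Rightarrow> nat \<Rightarrow> 'a list set" where
  "words S k = {ls. length ls = k \<and> set ls \<subseteq> S}"

lemma words_0 [simp]: "words S 0 = {[]}"
  by (auto simp: words_def)

lemma finite_words: "finite S \<Longrightarrow> finite (words S k)"
  using finite_lists_length_eq[of S k] by (simp add: words_def conj_commute)

lemma sum_words_Suc:
  "(\<Sum>ls\<in>words S (Suc k). f ls) = (\<Sum>x\<in>S. \<Sum>ls\<in>words S k. f (x # ls))"
proof -
  have words: "words S (Suc k) = (\<lambda>(x, ls). x # ls) ` (S \<times> words S k)"
    by (auto simp: words_def length_Suc_conv image_iff)
  have "inj_on (\<lambda>(x, ls). x # ls) (S \<times> words S k)"
    by (auto simp: inj_on_def)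
  then have "(\<Sum>ls\<in>words S (Suc k). f ls) = (\<Sum>p\<in>S \<times> words S k. f (fst p # snd p))"
    unfolding words by (subst sum.reindex) (simp_all add: case_prod_beta)
  then show ?thesis by (simp add: sum.cartesian_product case_prod_beta)
qed

lemma sum_list_eq_sum_count:
  "set ls \<subseteq> S \<Longrightarrow> finite S \<Longrightarrow> sum_list ls = (\<Sum>\<mu>\<in>S. of_nat (count_list ls \<mu>) * (\<mu>::'a::comm_semiring_1))"
proof (induction ls)
  case (Cons x ls)
  have "(\<Sum>\<mu>\<in>S. of_nat (count_list (x # ls) \<mu>) * \<mu>)
      = (\<Sum>\<mu>\<in>S. of_nat (count_list ls \<mu>) * \<mu> + (if x = \<mu> then \<mu> else 0))"
    by (intro sum.cong) (auto simp: distrib_right add.commute)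
  also have "\<dots> = (\<Sum>\<mu>\<in>S. of_nat (count_list ls \<mu>) * \<mu>) + x"
    using Cons.prems by (simp add: sum.distrib)
  finally show ?case using Cons by (simp add: add.commute)
qed simp

lemma mean_in_chN:
  assumes "set ls \<subseteq> S" "finite S" "length ls = N"
  shows "sum_list ls / of_nat N \<in> chN N S"
proof -
  have "sum_list ls / of_nat N = (\<Sum>\<mu>\<in>S. (of_nat (count_list ls \<mu>) / of_nat N) * \<mu>)"
    by (simp add: sum_list_eq_sum_count[OF assms(1,2)] sum_divide_distrib)
  moreover have "(\<Sum>\<mu>\<in>S. count_list ls \<mu>) = N"
    using sum_count_set[OF assms(1,2)] assms(3) by simp
  ultimately show ?thesis unfolding chN_def by blast
qed

lemma finite_chN:
  assumes "finite S"
  shows "finite (chN N S)"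
proof -
  let ?F = "\<lambda>m. (\<Sum>\<mu>\<in>S. (of_nat (m \<mu>) / of_nat N) * (\<mu>::complex))"
  have "chN N S \<subseteq> ?F ` (S \<rightarrow>\<^sub>E {0..N})"
  proof
    fix c assume "c \<in> chN N S"
    then obtain m where c: "c = ?F m" and m: "(\<Sum>\<mu>\<in>S. m \<mu>) = N" unfolding chN_def by blast
    have "m \<mu> \<le> N" if "\<mu> \<in> S" for \<mu>
      using member_le_sum[of \<mu> S m] that assms m by simp
    then have "restrict m S \<in> S \<rightarrow>\<^sub>E {0..N}" by simp
    moreover have "c = ?F (restrict m S)" unfolding c by (intro sum.cong) auto
    ultimately show "c \<in> ?F ` (S \<rightarrow>\<^sub>E {0..N})" by blast
  qed
  then show ?thesis by (rule finite_subset) (intro finite_imageI finite_PiE assms finite_atLeastAtMost)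
qed

lemma sum_chN_fibres:
  assumes "finite S"
  shows "(\<Sum>c\<in>chN N S. \<Sum>ls\<in>{ls. length ls = N \<and> set ls \<subseteq> S \<and> sum_list ls / of_nat N = c}. f ls)
       = (\<Sum>ls\<in>words S N. f ls)"
proof -
  let ?W = "\<lambda>c. {ls. length ls = N \<and> set ls \<subseteq> S \<and> sum_list ls / of_nat N = c}"
  have "(\<Union>c\<in>chN N S. ?W c) = words S N"
    using mean_in_chN[OF _ assms] by (auto simp: words_def)
  moreover have "finite (?W c)" for c
    by (rule finite_subset[OF _ finite_words[OF assms, of N]]) (auto simp: words_def)
  ultimately show ?thesis
    by (subst sum.UNION_disjoint[symmetric]) (auto simp: finite_chN[OF assms])
qed

section \<open>Expansion of the approximant and its total variation\<close>

lemma sum_matrix_mult_left: "(\<Sum>i\<in>S. (f i::complex^'n^'n)) ** M = (\<Sum>i\<in>S. f i ** M)"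
  by (induction S rule: infinite_finite_induct)
    (simp_all add: matrix_matrix_mult_def vec_eq_iff distrib_right sum.distrib)

lemma sum_matrix_mult_right: "(M::complex^'n^'n) ** (\<Sum>i\<in>S. f i) = (\<Sum>i\<in>S. M ** f i)"
  by (induction S rule: infinite_finite_induct) (simp_all add: matrix_add_ldistrib)

lemma cmat_scale_matrix_mult_left: "cmat_scale c (M::complex^'n^'n) ** P = cmat_scale c (M ** P)"
  by (simp add: cmat_scale_def matrix_matrix_mult_def vec_eq_iff sum_distrib_left mult.assoc)

lemma cmat_scale_matrix_mult_right: "(M::complex^'n^'n) ** cmat_scale c P = cmat_scale c (M ** P)"
  by (simp add: cmat_scale_def matrix_matrix_mult_def vec_eq_iff sum_distrib_left mult_ac)

lemma cmat_scale_cmat_scale [simp]: "cmat_scale a (cmat_scale b M) = cmat_scale (a * b) M"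
  by (simp add: cmat_scale_def vec_eq_iff mult.assoc)

lemma cmat_scale_1 [simp]: "cmat_scale 1 M = M"
  by (simp add: cmat_scale_def vec_eq_iff)

lemma cmat_scale_sum: "cmat_scale c (\<Sum>i\<in>S. f i) = (\<Sum>i\<in>S. cmat_scale c (f i))"
  by (simp add: cmat_scale_def vec_eq_iff sum_component sum_distrib_left)

lemma matrix_mult_diff_left: "((M::complex^'n^'n) - P) ** Q = M ** Q - P ** Q"
  by (simp add: matrix_matrix_mult_def vec_eq_iff left_diff_distrib sum_subtractf)

lemma matrix_mult_diff_right: "(M::complex^'n^'n) ** (P - Q) = M ** P - M ** Q"
  by (simp add: matrix_matrix_mult_def vec_eq_iff right_diff_distrib sum_subtractf)

definition spec_word :: "complex^'n^'n \<Rightarrow> complex^'n^'n \<Rightarrow> complex list \<Rightarrow> complex^'n^'n" where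
  "spec_word A G ls = foldr (\<lambda>\<mu> P. spec_proj A \<mu> ** G ** P) ls (mat 1)"

lemma spec_word_Nil [simp]: "spec_word A G [] = mat 1"
  by (simp add: spec_word_def)

lemma spec_word_Cons: "spec_word A G (\<mu> # ls) = spec_proj A \<mu> ** G ** spec_word A G ls"
  by (simp add: spec_word_def)

lemma Mword_eq_spec_word: "Mword A B N = spec_word A (mexp (cmat_scale (1 / of_nat N) B))"
  by (simp add: fun_eq_iff Mword_def spec_word_def)

context hermitian_matrix
begin

lemma matpow_mexp_mult_expansion:
  "matpow (mexp (cmat_scale s A) ** G) k
     = (\<Sum>ls\<in>words (spec A) k. cmat_scale (exp (s * sum_list ls)) (spec_word A G ls))"
proof (induction k)
  case (Suc k)
  let ?X = "mexp (cmat_scale s A)"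
  have step: "(?X ** G) ** spec_word A G ls
      = (\<Sum>\<mu>\<in>spec A. cmat_scale (exp (s * \<mu>)) (spec_word A G (\<mu> # ls)))" for ls
    by (simp add: mexp_cmat_scale_spectral sum_matrix_mult_left cmat_scale_matrix_mult_left spec_word_Cons)
  have "matpow (?X ** G) (Suc k)
      = (\<Sum>ls\<in>words (spec A) k. cmat_scale (exp (s * sum_list ls)) ((?X ** G) ** spec_word A G ls))"
    by (simp add: Suc sum_matrix_mult_right cmat_scale_matrix_mult_right)
  also have "\<dots> = (\<Sum>ls\<in>words (spec A) k. \<Sum>\<mu>\<in>spec A.
      cmat_scale (exp (s * sum_list (\<mu> # ls))) (spec_word A G (\<mu> # ls)))"
    by (simp add: step cmat_scale_sum distrib_left exp_add mult.commute)
  also have "\<dots> = (\<Sum>ls\<in>words (spec A) (Suc k). cmat_scale (exp (s * sum_list ls)) (spec_word A G ls))"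
    by (subst sum.swap) (rule sum_words_Suc[symmetric])
  finally show ?case .
qed simp

lemma opnorm_spec_proj_mult_le:
  assumes "\<mu> \<in> spec A" "\<nu> \<in> spec A"
  shows "opnorm (spec_proj A \<mu> ** G ** spec_proj A \<nu>) \<le> (if \<mu> = \<nu> then opnorm G else opnorm (G - mat 1))"
proof -
  have sandwich: "opnorm (spec_proj A \<mu> ** X ** spec_proj A \<nu>) \<le> opnorm X" for X
  proof -
    have "opnorm (spec_proj A \<mu> ** X ** spec_proj A \<nu>) \<le> opnorm (spec_proj A \<mu>) * opnorm X * opnorm (spec_proj A \<nu>)"
      by (meson opnorm_mult_le opnorm_nonneg mult_right_mono order_trans)
    also have "\<dots> \<le> 1 * opnorm X * 1"
      by (intro mult_mono opnorm_spec_proj_le assms) (simp_all add: opnorm_nonneg)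
    finally show ?thesis by simp
  qed
  have "\<mu> \<noteq> \<nu> \<Longrightarrow> spec_proj A \<mu> ** G ** spec_proj A \<nu> = spec_proj A \<mu> ** (G - mat 1) ** spec_proj A \<nu>"
    by (simp add: matrix_mult_diff_left matrix_mult_diff_right spec_proj_orthogonal assms)
  then show ?thesis using sandwich[of G] sandwich[of "G - mat 1"] by auto
qed

lemma spec_word_Cons_Cons:
  assumes "\<nu> \<in> spec A"
  shows "spec_word A G (\<mu> # \<nu> # ls) = (spec_proj A \<mu> ** G ** spec_proj A \<nu>) ** spec_word A G (\<nu> # ls)"
proof -
  have "(spec_proj A \<mu> ** G ** spec_proj A \<nu>) ** spec_word A G (\<nu> # ls)
      = (spec_proj A \<mu> ** G) ** ((spec_proj A \<nu> ** spec_proj A \<nu>) ** (G ** spec_word A G ls))"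
    by (simp add: spec_word_Cons matrix_mul_assoc)
  also have "\<dots> = spec_word A G (\<mu> # \<nu> # ls)"
    by (simp add: spec_proj_idem[OF assms] spec_word_Cons matrix_mul_assoc)
  finally show ?thesis by simp
qed

lemma sum_opnorm_spec_word_Cons_le:
  assumes "\<nu> \<in> spec A"
  shows "(\<Sum>ls\<in>words (spec A) k. opnorm (spec_word A G (\<nu> # ls)))
    \<le> opnorm G * (opnorm G + (real (card (spec A)) - 1) * opnorm (G - mat 1)) ^ k"
  using assms
proof (induction k arbitrary: \<nu>)
  case 0
  have "opnorm (spec_proj A \<nu> ** G) \<le> opnorm (spec_proj A \<nu>) * opnorm G" by (rule opnorm_mult_le)
  also have "\<dots> \<le> opnorm G" using opnorm_spec_proj_le[OF "0.prems"] opnorm_nonneg[of G]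
    by (metis mult_left_le_one_le opnorm_nonneg)
  finally show ?case by (simp add: spec_word_Cons)
next
  case (Suc k)
  let ?w = "\<lambda>\<nu>'. if \<nu> = \<nu>' then opnorm G else opnorm (G - mat 1)"
  let ?S = "\<lambda>\<nu>'. \<Sum>ls\<in>words (spec A) k. opnorm (spec_word A G (\<nu>' # ls))"
  let ?r = "opnorm G + (real (card (spec A)) - 1) * opnorm (G - mat 1)"
  have "(\<Sum>ls\<in>words (spec A) (Suc k). opnorm (spec_word A G (\<nu> # ls)))
      = (\<Sum>\<nu>'\<in>spec A. \<Sum>ls\<in>words (spec A) k. opnorm (spec_word A G (\<nu> # \<nu>' # ls)))"
    by (rule sum_words_Suc)
  also have "\<dots> \<le> (\<Sum>\<nu>'\<in>spec A. ?w \<nu>' * ?S \<nu>')"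
    unfolding sum_distrib_left
  proof (intro sum_mono)
    fix \<nu>' ls assume \<nu>': "\<nu>' \<in> spec A"
    have "opnorm (spec_word A G (\<nu> # \<nu>' # ls))
        \<le> opnorm (spec_proj A \<nu> ** G ** spec_proj A \<nu>') * opnorm (spec_word A G (\<nu>' # ls))"
      unfolding spec_word_Cons_Cons[OF \<nu>'] by (rule opnorm_mult_le)
    also have "\<dots> \<le> ?w \<nu>' * opnorm (spec_word A G (\<nu>' # ls))"
      by (rule mult_right_mono[OF opnorm_spec_proj_mult_le[OF Suc.prems \<nu>'] opnorm_nonneg])
    finally show "opnorm (spec_word A G (\<nu> # \<nu>' # ls)) \<le> ?w \<nu>' * opnorm (spec_word A G (\<nu>' # ls))" .
  qed
  also have "\<dots> \<le> (\<Sum>\<nu>'\<in>spec A. ?w \<nu>' * (opnorm G * ?r ^ k))"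
    by (intro sum_mono mult_left_mono Suc.IH) (simp_all add: opnorm_nonneg)
  also have "\<dots> = ?r * (opnorm G * ?r ^ k)"
  proof -
    have "(\<Sum>\<nu>'\<in>spec A. ?w \<nu>') = opnorm G + (\<Sum>\<nu>'\<in>spec A - {\<nu>}. ?w \<nu>')"
      using Suc.prems finite_spec by (simp add: sum.remove)
    moreover have "(\<Sum>\<nu>'\<in>spec A - {\<nu>}. ?w \<nu>') = real (card (spec A) - 1) * opnorm (G - mat 1)"
    proof -
      have "(\<Sum>\<nu>'\<in>spec A - {\<nu>}. ?w \<nu>') = (\<Sum>\<nu>'\<in>spec A - {\<nu>}. opnorm (G - mat 1))"
        by (rule sum.cong) auto
      then show ?thesis using Suc.prems finite_spec by simp
    qed
    moreover have "real (card (spec A) - 1) = real (card (spec A)) - 1"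
    proof -
      have "card (spec A) \<noteq> 0" using Suc.prems finite_spec by auto
      then show ?thesis by (simp add: of_nat_diff)
    qed
    ultimately have "(\<Sum>\<nu>'\<in>spec A. ?w \<nu>') = ?r" by simp
    then show ?thesis by (simp add: sum_distrib_right[symmetric])
  qed
  finally show ?case by (simp add: algebra_simps)
qed

lemma sum_opnorm_spec_word_le:
  assumes "N \<ge> 1"
  shows "(\<Sum>ls\<in>words (spec A) N. opnorm (spec_word A G ls))
    \<le> real (card (spec A)) * opnorm G * (opnorm G + (real (card (spec A)) - 1) * opnorm (G - mat 1)) ^ (N - 1)"
proof -
  have "(\<Sum>ls\<in>words (spec A) N. opnorm (spec_word A G ls))
      = (\<Sum>\<nu>\<in>spec A. \<Sum>ls\<in>words (spec A) (N - 1). opnorm (spec_word A G (\<nu> # ls)))"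
    using assms sum_words_Suc[of _ "spec A" "N - 1"] by simp
  also have "\<dots> \<le> (\<Sum>\<nu>\<in>spec A. opnorm G * (opnorm G + (real (card (spec A)) - 1) * opnorm (G - mat 1)) ^ (N - 1))"
    by (intro sum_mono sum_opnorm_spec_word_Cons_le)
  finally show ?thesis by simp
qed

end

lemma card_mult_power_le_exp:
  fixes g d \<beta> b :: real and l n N :: nat
  assumes g: "0 \<le> g" "g \<le> exp \<beta>" and d: "0 \<le> d" "d \<le> exp \<beta> - 1"
    and \<beta>: "0 \<le> \<beta>" "\<beta> * real N \<le> b" and "l \<le> n" "1 \<le> N"
  shows "real l * g * (g + (real l - 1) * d) ^ (N - 1) \<le> real n * exp (real n * b)"
proof (cases "l = 0")
  case False
  let ?r = "g + (real l - 1) * d"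
  have "?r \<le> exp \<beta> + (real l - 1) * (exp \<beta> - 1)"
    using False g d by (intro add_mono mult_left_mono) auto
  also have "\<dots> = 1 + real l * (exp \<beta> - 1)" by (simp add: algebra_simps)
  also have "\<dots> \<le> (1 + (exp \<beta> - 1)) ^ l" by (rule Bernoulli_inequality) simp
  also have "\<dots> = exp (real l * \<beta>)" by (simp add: exp_of_nat_mult)
  finally have r: "?r \<le> exp (real l * \<beta>)" .
  have "\<beta> \<le> real l * \<beta>" using False \<beta>(1) by (simp add: mult_le_cancel_right1)
  then have "g \<le> exp (real l * \<beta>)" using g(2) by (meson exp_le_cancel_iff order_trans)
  then have "real l * g * ?r ^ (N - 1) \<le> real l * exp (real l * \<beta>) * exp (real l * \<beta>) ^ (N - 1)"
    using False g d r by (intro mult_mono power_mono) auto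
  also have "\<dots> = real l * exp (real N * (real l * \<beta>))"
    using \<open>1 \<le> N\<close> by (simp add: exp_of_nat_mult power_Suc[symmetric] del: power_Suc)
  also have "\<dots> \<le> real n * exp (real n * b)"
  proof (intro mult_mono)
    have "real N * (real l * \<beta>) = real l * (\<beta> * real N)" by simp
    also have "\<dots> \<le> real l * b" using \<beta>(2) by (simp add: mult_left_mono)
    also have "\<dots> \<le> real n * b"
      using \<open>l \<le> n\<close> \<beta> by (intro mult_right_mono) (auto intro: order_trans[OF _ \<beta>(2)])
    finally show "exp (real N * (real l * \<beta>)) \<le> exp (real n * b)" by simp
  qed (use \<open>l \<le> n\<close> in auto)
  finally show ?thesis .
qed simp

context hermitian_matrix
begin

lemma MN_eq_sum_spec_word:
  "MN A B N c = (\<Sum>ls\<in>{ls. length ls = N \<and> set ls \<subseteq> spec A \<and> sum_list ls / of_nat N = c}.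
     spec_word A (mexp (cmat_scale (1 / of_nat N) B)) ls)"
  by (simp add: MN_def Mword_eq_spec_word)

lemma approximant_expansion:
  "matpow (mexp (cmat_scale (t / of_nat N) A) ** mexp (cmat_scale (1 / of_nat N) B)) N
     = (\<Sum>c\<in>chN N (spec A). cmat_scale (exp (t * c)) (MN A B N c))"
proof -
  let ?G = "mexp (cmat_scale (1 / of_nat N) B)"
  have "(\<Sum>c\<in>chN N (spec A). cmat_scale (exp (t * c)) (MN A B N c))
      = (\<Sum>c\<in>chN N (spec A). \<Sum>ls\<in>{ls. length ls = N \<and> set ls \<subseteq> spec A \<and> sum_list ls / of_nat N = c}.
           cmat_scale (exp (t / of_nat N * sum_list ls)) (spec_word A ?G ls))"
    by (intro sum.cong refl) (auto simp: MN_eq_sum_spec_word cmat_scale_sum intro!: sum.cong)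
  also have "\<dots> = (\<Sum>ls\<in>words (spec A) N. cmat_scale (exp (t / of_nat N * sum_list ls)) (spec_word A ?G ls))"
    by (rule sum_chN_fibres[OF finite_spec])
  also have "\<dots> = matpow (mexp (cmat_scale (t / of_nat N) A) ** ?G) N"
    by (rule matpow_mexp_mult_expansion[symmetric])
  finally show ?thesis by simp
qed

lemma sum_opnorm_MN_le:
  assumes "N \<ge> 1"
  shows "(\<Sum>c\<in>chN N (spec A). opnorm (MN A B N c)) \<le> real CARD('n) * exp (real CARD('n) * opnorm B)"
proof -
  let ?G = "mexp (cmat_scale (1 / of_nat N) B)"
  let ?\<beta> = "opnorm (cmat_scale (1 / of_nat N) B)"
  have "(\<Sum>c\<in>chN N (spec A). opnorm (MN A B N c))
      \<le> (\<Sum>c\<in>chN N (spec A). \<Sum>ls\<in>{ls. length ls = N \<and> set ls \<subseteq> spec A \<and> sum_list ls / of_nat N = c}.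
           opnorm (spec_word A ?G ls))"
    unfolding MN_eq_sum_spec_word
  proof (intro sum_mono opnorm_sum_le)
    show "finite {ls. length ls = N \<and> set ls \<subseteq> spec A \<and> sum_list ls / of_nat N = c}" for c
      by (rule finite_subset[OF _ finite_words[OF finite_spec, of N]]) (auto simp: words_def)
  qed
  also have "\<dots> = (\<Sum>ls\<in>words (spec A) N. opnorm (spec_word A ?G ls))"
    by (rule sum_chN_fibres[OF finite_spec])
  also have "\<dots> \<le> real (card (spec A)) * opnorm ?G * (opnorm ?G + (real (card (spec A)) - 1) * opnorm (?G - mat 1)) ^ (N - 1)"
    by (rule sum_opnorm_spec_word_le[OF assms])
  also have "\<dots> \<le> real CARD('n) * exp (real CARD('n) * opnorm B)"
  proof (rule card_mult_power_le_exp)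
    have "?\<beta> \<le> opnorm B / real N"
      using opnorm_cmat_scale_le[of "1 / of_nat N" B] by (simp add: norm_divide)
    then show "?\<beta> * real N \<le> opnorm B" using assms by (simp add: field_simps)
  qed (use assms in \<open>simp_all add: opnorm_nonneg opnorm_mexp_le opnorm_mexp_minus_1_le card_spec_le\<close>)
  finally show ?thesis .
qed

end

theorem lemma6p2:
  fixes A B :: "complex^'n^'n" and N :: nat
  assumes "hermitian A" and "N \<ge> 1"
  shows "(\<forall>t::complex. matpow (mexp (cmat_scale (t / of_nat N) A) ** mexp (cmat_scale (1 / of_nat N) B)) N
           = (\<Sum>c\<in>chN N (spec A). cmat_scale (exp (t * c)) (MN A B N c)))
       \<and> (\<Sum>c\<in>chN N (spec A). opnorm (MN A B N c)) \<le> real CARD('n) * exp (real CARD('n) * opnorm B)"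
proof -
  interpret hermitian_matrix A by unfold_locales (rule assms(1))
  show ?thesis using approximant_expansion sum_opnorm_MN_le[OF assms(2)] by blast
qed

end
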